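(* Let $\bar{\boldsymbol{\Psi}}_{\mathrm{id}}=\mathrm{diag}(\bar\psi_{\mathrm{id},1},\dots,\bar\psi_{\mathrm{id},N})$ with all entries positive, $\bar\psi_{\mathrm{f},1}>0$, $\mathbf{w}_1=(w_{11},\dots,w_{1N})^\top\in\mathbb{R}^N\setminus\{\mathbf{0}\}$, $\theta\in[0,1]$, and $\alpha_1,\dots,\alpha_T>0$, $\beta_1,\dots,\beta_T>0$ with $\sum_t\alpha_t=\sum_t\beta_t=1$. For nonzero $\mathbf{x}_0\in\mathbb{R}^N$ let $$\Upsilon(\mathbf{x}_0)=\frac{\sum_{t=1}^T(\alpha_t(1-\theta)+\beta_t\theta)^2\,\mathbf{x}_0^\top\left(\alpha_t\bar{\boldsymbol{\Psi}}_{\mathrm{id}}+\beta_t\bar\psi_{\mathrm{f},1}\mathbf{w}_1\mathbf{w}_1^\top\right)^{-1}\mathbf{x}_0}{\mathbf{x}_0^\top\left(\bar{\boldsymbol{\Psi}}_{\mathrm{id}}+\bar\psi_{\mathrm{f},1}\mathbf{w}_1\mathbf{w}_1^\top\right)^{-1}\mathbf{x}_0},$$ $\gamma_t=\beta_t/\alpha_t$, $\eta_1=\bar\psi_{\mathrm{f},1}\mathbf{w}_1^\top\bar{\boldsymbol{\Psi}}_{\mathrm{id}}^{-1}\mathbf{w}_1$, $\Delta=\sum_{t=1}^T\frac{\alpha_t(1-\theta(1-\gamma_t))^2(1-\gamma_t)}{1+\eta_1\gamma_t}$, and $\eta_{1,i}=\frac{w_{1i}^2\bar\psi_{\mathrm{f},1}}{\bar\psi_{\mathrm{id},i}}$.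 Then for each standard basis vector $\mathbf{e}_i$, $$\Upsilon(\mathbf{e}_i)=1+\theta^2\Big(\sum_{t=1}^T\frac{\beta_t^2}{\alpha_t}-1\Big)+\frac{\eta_{1,i}}{1+\eta_1-\eta_{1,i}}\,\Delta,$$ and $$\arg\max_{i=1,\dots,N}\Upsilon(\mathbf{e}_i)=\begin{cases}\arg\max_{i}\ w_{1i}^2/\bar\psi_{\mathrm{id},i}&\text{if }\Delta\ge0,\\ \arg\min_{i}\ w_{1i}^2/\bar\psi_{\mathrm{id},i}&\text{if }\Delta\le0.\end{cases}$$
   Context: $\Upsilon(\mathbf{x}_0)$ is the ratio of the expected cost of the separable schedule $(\alpha_t(1-\theta)+\beta_t\theta)\mathbf{x}_0$ to the minimal expected cost of liquidating $\mathbf{x}_0$, with time-$t$ impact matrix $\mathbf{G}_t=\left(\alpha_t\bar{\boldsymbol{\Psi}}_{\mathrm{id}}+\beta_t\bar\psi_{\mathrm{f},1}\mathbf{w}_1\mathbf{w}_1^\top\right)^{-1}$ and cost $\sum_t\tfrac12\mathbf{v}_t^\top\mathbf{G}_t\mathbf{v}_t$; $\mathbf{e}_i$ corresponds to liquidating a single order in stock $i$. *)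

theory Defs
  imports "HOL-Analysis.Analysis"
begin

definition diag_mat :: "(real ^ 'n) \<Rightarrow> real ^ 'n ^ 'n" where
  "diag_mat d = (\<chi> i j. if i = j then d $ i else 0)"

definition outer :: "real ^ 'n \<Rightarrow> real ^ 'n \<Rightarrow> real ^ 'n ^ 'n" where
  "outer u v = (\<chi> i j. u $ i * v $ j)"

definition qform :: "real ^ 'n ^ 'n \<Rightarrow> real ^ 'n \<Rightarrow> real" where
  "qform M x = x \<bullet> (M *v x)"

definition impact :: "real ^ 'n \<Rightarrow> real \<Rightarrow> real ^ 'n \<Rightarrow> real \<Rightarrow> real \<Rightarrow> real ^ 'n ^ 'n" where
  "impact psi_id psi_f w a b = a *\<^sub>R diag_mat psi_id + (b * psi_f) *\<^sub>R outer w w"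

text \<open>Upsilon(x0): ratio of separable-schedule cost to minimal cost; times t = 1..T.\<close>
definition Upsilon ::
  "real ^ 'n \<Rightarrow> real \<Rightarrow> real ^ 'n \<Rightarrow> real \<Rightarrow> nat \<Rightarrow> (nat \<Rightarrow> real) \<Rightarrow> (nat \<Rightarrow> real) \<Rightarrow> real ^ 'n \<Rightarrow> real" where
  "Upsilon psi_id psi_f w \<theta> T \<alpha> \<beta> x0 =
     (\<Sum>t\<in>{1..T}. (\<alpha> t * (1 - \<theta>) + \<beta> t * \<theta>)\<^sup>2 *
        qform (matrix_inv (impact psi_id psi_f w (\<alpha> t) (\<beta> t))) x0)
     / qform (matrix_inv (impact psi_id psi_f w 1 1)) x0"

definition argmax_set :: "('n \<Rightarrow> real) \<Rightarrow> 'n set" where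
  "argmax_set f = {i. \<forall>j. f j \<le> f i}"

definition argmin_set :: "('n \<Rightarrow> real) \<Rightarrow> 'n set" where
  "argmin_set f = {i. \<forall>j. f i \<le> f j}"

end

(*
  By Sherman-Morrison, (a Psi_id + b psi_f w w^T)^-1 is a diagonal matrix minus a rank-one
  matrix, so its (i,i) entry is (1 + gamma (eta1 - eta1_i)) / (a psi_id_i (1 + gamma eta1))
  with gamma = b / a. Dividing by the same entry for a = b = 1 factors it as
  1/a * (1 + h_i (1 - gamma) / (1 + eta1 gamma)) with h_i = eta1_i / (1 + eta1 - eta1_i).
  Since (alpha_t (1 - theta) + beta_t theta)^2 = alpha_t^2 (1 - theta (1 - gamma_t))^2, summing
  over t gives Upsilon(e_i) = C + h_i Delta with C independent of i. As h_i is increasing in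
  w_1i^2 / psi_id_i, the sign of Delta decides whether Upsilon(e_i) is largest at the largest
  or at the smallest of these ratios.
*)

theory Submission
  imports Defs
begin

lemma matrix_inv_eqI:
  fixes A B :: "'a::field ^ 'n ^ 'n"
  assumes "A ** B = mat 1"
  shows "matrix_inv A = B"
proof -
  have BA: "B ** A = mat 1"
    using assms matrix_left_right_inverse by blast
  have "A ** matrix_inv A = mat 1 \<and> matrix_inv A ** A = mat 1"
    unfolding matrix_inv_def by (rule someI[of _ B]) (use assms BA in blast)
  then have inv: "A ** matrix_inv A = mat 1" ..
  have "matrix_inv A = (B ** A) ** matrix_inv A"
    using BA by simp
  also have "\<dots> = B"
    by (simp flip: matrix_mul_assoc add: inv)
  finally show ?thesis .
qed

lemma diag_mat_mult_nth: "(diag_mat d ** A) $ i $ j = d $ i * A $ i $ j"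
  by (simp add: matrix_matrix_mult_def diag_mat_def if_distrib if_distribR cong: if_cong)

lemma outer_mult_nth: "(outer u v ** A) $ i $ j = u $ i * (v v* A) $ j"
  by (simp add: matrix_matrix_mult_def vector_matrix_mult_def outer_def sum_distrib_left mult.assoc)

lemma matrix_add_rdistrib_nth:
  fixes A B :: "'a::semiring_1 ^ 'n ^ 'm" and C :: "'a ^ 'p ^ 'n"
  shows "((A + B) ** C) $ i $ j = (A ** C) $ i $ j + (B ** C) $ i $ j"
  by (simp add: matrix_matrix_mult_def distrib_right sum.distrib)

lemma qform_axis: "qform M (axis i 1) = M $ i $ i"
  by (simp add: qform_def matrix_vector_mult_basis column_def inner_axis')

lemma matrix_inv_diag_plus_outer:
  fixes d u v :: "real ^ 'n"
  assumes d: "\<And>i. d $ i \<noteq> 0"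
    and nz: "1 + (\<Sum>j\<in>UNIV. u $ j * v $ j / d $ j) \<noteq> 0"
  shows "matrix_inv (diag_mat d + outer u v)
    = diag_mat (\<chi> i. 1 / d $ i)
      - (1 / (1 + (\<Sum>j\<in>UNIV. u $ j * v $ j / d $ j))) *\<^sub>R outer (\<chi> i. u $ i / d $ i) (\<chi> j. v $ j / d $ j)"
proof -
  define \<sigma> where "\<sigma> = (\<Sum>j\<in>UNIV. u $ j * v $ j / d $ j)"
  define k where "k = 1 / (1 + \<sigma>)"
  define N where "N = diag_mat (\<chi> i. 1 / d $ i) - k *\<^sub>R outer (\<chi> i. u $ i / d $ i) (\<chi> j. v $ j / d $ j)"
  have k: "k * (1 + \<sigma>) = 1"
    using nz unfolding k_def \<sigma>_def by simp
  have row: "(v v* N) $ j = (1 - k * \<sigma>) * (v $ j / d $ j)" for j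
  proof -
    have "v $ i * N $ i $ j = (if i = j then v $ j / d $ j else 0) - k * (v $ j / d $ j) * (u $ i * v $ i / d $ i)" for i
      by (simp add: N_def diag_mat_def outer_def field_simps)
    then have "(v v* N) $ j = (\<Sum>i\<in>UNIV. if i = j then v $ j / d $ j else 0) - k * (v $ j / d $ j) * \<sigma>"
      by (simp add: vector_matrix_mult_def \<sigma>_def sum_subtractf sum_distrib_left)
    also have "\<dots> = (1 - k * \<sigma>) * (v $ j / d $ j)"
      by (simp add: algebra_simps diff_divide_distrib)
    finally show ?thesis .
  qed
  have "((diag_mat d + outer u v) ** N) $ i $ j = mat 1 $ i $ j" for i j
  proof -
    have "((diag_mat d + outer u v) ** N) $ i $ j = d $ i * N $ i $ j + u $ i * (v v* N) $ j"
      by (simp only: matrix_add_rdistrib_nth diag_mat_mult_nth outer_mult_nth)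
    also have "\<dots> = (if i = j then 1 else 0) + u $ i * (v $ j / d $ j) * (1 - k * (1 + \<sigma>))"
      using d[of i] d[of j] unfolding row by (simp add: N_def diag_mat_def outer_def field_simps)
    finally show ?thesis
      by (simp add: k mat_def)
  qed
  then have "matrix_inv (diag_mat d + outer u v) = N"
    by (intro matrix_inv_eqI) (simp add: vec_eq_iff)
  then show ?thesis
    unfolding N_def k_def \<sigma>_def .
qed

lemma impact_eq_diag_plus_outer:
  "impact psi f w a b = diag_mat (a *\<^sub>R psi) + outer ((b * f) *\<^sub>R w) w"
  by (simp add: impact_def diag_mat_def outer_def vec_eq_iff)

lemma qform_matrix_inv_impact_axis:
  fixes psi w :: "real ^ 'n" and f a b :: real and i :: 'n
  assumes psi: "\<And>j. psi $ j > 0" and a: "a > 0" and b: "b \<ge> 0" and f: "f \<ge> 0"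
  defines "\<eta> \<equiv> f * (\<Sum>j\<in>UNIV. (w $ j)\<^sup>2 / psi $ j)"
    and "\<eta>i \<equiv> (w $ i)\<^sup>2 * f / psi $ i"
  shows "qform (matrix_inv (impact psi f w a b)) (axis i 1)
    = (1 + b / a * (\<eta> - \<eta>i)) / (a * psi $ i * (1 + b / a * \<eta>))"
proof -
  have "\<eta> \<ge> 0"
    unfolding \<eta>_def using psi f by (intro mult_nonneg_nonneg sum_nonneg) (auto intro: divide_nonneg_pos)
  then have pos: "1 + b / a * \<eta> > 0"
    using a b by (simp add: add_pos_nonneg)
  have \<sigma>: "(\<Sum>j\<in>UNIV. ((b * f) *\<^sub>R w) $ j * w $ j / (a *\<^sub>R psi) $ j) = b / a * \<eta>"
    unfolding \<eta>_def by (simp add: sum_distrib_left power2_eq_square field_simps)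
  have d: "(a *\<^sub>R psi) $ j \<noteq> 0" for j
    using a psi[of j] by simp
  have nz: "1 + (\<Sum>j\<in>UNIV. ((b * f) *\<^sub>R w) $ j * w $ j / (a *\<^sub>R psi) $ j) \<noteq> 0"
    using pos unfolding \<sigma> by simp
  have "qform (matrix_inv (impact psi f w a b)) (axis i 1)
      = 1 / (a * psi $ i) - (b * f * w $ i / (a * psi $ i)) * (w $ i / (a * psi $ i)) / (1 + b / a * \<eta>)"
    unfolding impact_eq_diag_plus_outer matrix_inv_diag_plus_outer[OF d nz] \<sigma> qform_axis
    by (simp add: diag_mat_def outer_def)
  also have "(b * f * w $ i / (a * psi $ i)) * (w $ i / (a * psi $ i)) = b / a * \<eta>i / (a * psi $ i)"
    unfolding \<eta>i_def using a psi[of i] by (simp add: power2_eq_square field_simps)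
  also have "1 / (a * psi $ i) - b / a * \<eta>i / (a * psi $ i) / (1 + b / a * \<eta>)
      = (1 + b / a * (\<eta> - \<eta>i)) / (a * psi $ i * (1 + b / a * \<eta>))"
    using a psi[of i] pos by (simp add: divide_simps) (simp add: algebra_simps)
  finally show ?thesis .
qed

lemma rank_one_weight_bounds:
  fixes psi w :: "real ^ 'n" and f :: real
  assumes psi: "\<And>j. psi $ j > 0" and f: "f \<ge> 0"
  shows "0 \<le> (w $ i)\<^sup>2 * f / psi $ i"
    and "(w $ i)\<^sup>2 * f / psi $ i \<le> f * (\<Sum>j\<in>UNIV. (w $ j)\<^sup>2 / psi $ j)"
proof -
  show "0 \<le> (w $ i)\<^sup>2 * f / psi $ i"
    using psi[of i] f by simp
  have "(w $ i)\<^sup>2 / psi $ i \<le> (\<Sum>j\<in>UNIV. (w $ j)\<^sup>2 / psi $ j)"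
    using psi by (intro member_le_sum) (auto intro: divide_nonneg_pos)
  then have "f * ((w $ i)\<^sup>2 / psi $ i) \<le> f * (\<Sum>j\<in>UNIV. (w $ j)\<^sup>2 / psi $ j)"
    using f by (rule mult_left_mono)
  then show "(w $ i)\<^sup>2 * f / psi $ i \<le> f * (\<Sum>j\<in>UNIV. (w $ j)\<^sup>2 / psi $ j)"
    by (simp add: mult.commute)
qed

lemma rank_one_speed_factorization:
  fixes \<gamma> \<eta> \<eta>i :: real
  assumes "1 + \<eta> - \<eta>i \<noteq> 0" "1 + \<eta> \<noteq> 0" "1 + \<eta> * \<gamma> \<noteq> 0"
  shows "(1 + \<gamma> * (\<eta> - \<eta>i)) / (1 + \<eta> * \<gamma>)
    = (1 + \<eta> - \<eta>i) / (1 + \<eta>) * (1 + \<eta>i / (1 + \<eta> - \<eta>i) * ((1 - \<gamma>) / (1 + \<eta> * \<gamma>)))"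
  using assms by (simp add: divide_simps) (simp add: algebra_simps)

lemma qform_matrix_inv_impact_axis_rescale:
  fixes psi w :: "real ^ 'n" and f a b :: real and i :: 'n
  assumes psi: "\<And>j. psi $ j > 0" and a: "a > 0" and b: "b \<ge> 0" and f: "f \<ge> 0"
  defines "\<eta> \<equiv> f * (\<Sum>j\<in>UNIV. (w $ j)\<^sup>2 / psi $ j)"
    and "\<eta>i \<equiv> (w $ i)\<^sup>2 * f / psi $ i"
  shows "qform (matrix_inv (impact psi f w a b)) (axis i 1)
    = qform (matrix_inv (impact psi f w 1 1)) (axis i 1) / a
      * (1 + \<eta>i / (1 + \<eta> - \<eta>i) * ((1 - b / a) / (1 + \<eta> * (b / a))))"
proof -
  have \<eta>i: "0 \<le> \<eta>i" "\<eta>i \<le> \<eta>"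
    unfolding \<eta>_def \<eta>i_def using psi f by (rule rank_one_weight_bounds)+
  have pos: "1 + \<eta> - \<eta>i > 0" "1 + \<eta> > 0" "1 + \<eta> * (b / a) > 0"
    using \<eta>i a b by (simp_all add: add_pos_nonneg)
  have "qform (matrix_inv (impact psi f w a b)) (axis i 1)
      = (1 + b / a * (\<eta> - \<eta>i)) / (1 + \<eta> * (b / a)) / (a * psi $ i)"
    unfolding qform_matrix_inv_impact_axis[OF psi a b f] \<eta>_def[symmetric] \<eta>i_def[symmetric]
    by (simp add: mult.commute)
  also have "\<dots> = (1 + \<eta> - \<eta>i) / (1 + \<eta>)
      * (1 + \<eta>i / (1 + \<eta> - \<eta>i) * ((1 - b / a) / (1 + \<eta> * (b / a)))) / (a * psi $ i)"
    using pos by (subst rank_one_speed_factorization) simp_all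
  also have "\<dots> = qform (matrix_inv (impact psi f w 1 1)) (axis i 1) / a
      * (1 + \<eta>i / (1 + \<eta> - \<eta>i) * ((1 - b / a) / (1 + \<eta> * (b / a))))"
    unfolding qform_matrix_inv_impact_axis[OF psi zero_less_one zero_le_one f] \<eta>_def[symmetric] \<eta>i_def[symmetric]
    by (simp add: mult_ac add_diff_eq)
  finally show ?thesis .
qed

lemma sum_weighted_schedule_sq:
  fixes \<alpha> \<beta> :: "'t \<Rightarrow> real" and \<theta> :: real
  assumes "\<And>t. t \<in> A \<Longrightarrow> \<alpha> t \<noteq> 0" and "(\<Sum>t\<in>A. \<alpha> t) = 1" and "(\<Sum>t\<in>A. \<beta> t) = 1"
  shows "(\<Sum>t\<in>A. \<alpha> t * (1 - \<theta> * (1 - \<beta> t / \<alpha> t))\<^sup>2) = 1 + \<theta>\<^sup>2 * ((\<Sum>t\<in>A. (\<beta> t)\<^sup>2 / \<alpha> t) - 1)"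
proof -
  have "(\<Sum>t\<in>A. \<alpha> t * (1 - \<theta> * (1 - \<beta> t / \<alpha> t))\<^sup>2)
      = (\<Sum>t\<in>A. (1 - \<theta>)\<^sup>2 * \<alpha> t + 2 * \<theta> * (1 - \<theta>) * \<beta> t + \<theta>\<^sup>2 * ((\<beta> t)\<^sup>2 / \<alpha> t))"
    using assms(1) by (intro sum.cong) (simp_all add: field_simps power2_eq_square)
  also have "\<dots> = (1 - \<theta>)\<^sup>2 * (\<Sum>t\<in>A. \<alpha> t) + 2 * \<theta> * (1 - \<theta>) * (\<Sum>t\<in>A. \<beta> t)
      + \<theta>\<^sup>2 * (\<Sum>t\<in>A. (\<beta> t)\<^sup>2 / \<alpha> t)"
    by (simp add: sum.distrib sum_distrib_left)
  finally show ?thesis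
    unfolding assms(2,3) by (simp add: algebra_simps power2_eq_square)
qed

lemma Upsilon_axis:
  fixes psi_id w :: "real ^ 'n" and psi_f \<theta> :: real and \<alpha> \<beta> :: "nat \<Rightarrow> real" and i :: 'n
  assumes psi_id_pos: "\<And>j. psi_id $ j > 0" and psi_f: "psi_f \<ge> 0"
    and alpha_pos: "\<And>t. t \<in> {1..T} \<Longrightarrow> \<alpha> t > 0"
    and beta_nonneg: "\<And>t. t \<in> {1..T} \<Longrightarrow> \<beta> t \<ge> 0"
    and alpha_sum: "(\<Sum>t\<in>{1..T}. \<alpha> t) = 1"
    and beta_sum: "(\<Sum>t\<in>{1..T}. \<beta> t) = 1"
  defines "\<eta> \<equiv> psi_f * (\<Sum>j\<in>UNIV. (w $ j)\<^sup>2 / psi_id $ j)"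
    and "\<eta>i \<equiv> (w $ i)\<^sup>2 * psi_f / psi_id $ i"
    and "\<Delta> \<equiv> (\<Sum>t\<in>{1..T}. \<alpha> t * (1 - \<theta> * (1 - \<beta> t / \<alpha> t))\<^sup>2 * (1 - \<beta> t / \<alpha> t)
                 / (1 + psi_f * (\<Sum>j\<in>UNIV. (w $ j)\<^sup>2 / psi_id $ j) * (\<beta> t / \<alpha> t)))"
  shows "Upsilon psi_id psi_f w \<theta> T \<alpha> \<beta> (axis i 1)
    = 1 + \<theta>\<^sup>2 * ((\<Sum>t\<in>{1..T}. (\<beta> t)\<^sup>2 / \<alpha> t) - 1) + \<eta>i / (1 + \<eta> - \<eta>i) * \<Delta>"
proof -
  define q0 where "q0 = qform (matrix_inv (impact psi_id psi_f w 1 1)) (axis i 1)"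
  define h where "h = \<eta>i / (1 + \<eta> - \<eta>i)"
  define S where "S t = \<alpha> t * (1 - \<theta> * (1 - \<beta> t / \<alpha> t))\<^sup>2" for t
  have "0 \<le> \<eta>i" "\<eta>i \<le> \<eta>"
    unfolding \<eta>_def \<eta>i_def using psi_id_pos psi_f by (rule rank_one_weight_bounds)+
  then have "q0 \<noteq> 0"
    unfolding q0_def qform_matrix_inv_impact_axis[OF psi_id_pos zero_less_one zero_le_one psi_f]
    using psi_id_pos[of i] by (simp add: \<eta>_def[symmetric] \<eta>i_def[symmetric] add_pos_nonneg)
  have cost_term: "(\<alpha> t * (1 - \<theta>) + \<beta> t * \<theta>)\<^sup>2 * qform (matrix_inv (impact psi_id psi_f w (\<alpha> t) (\<beta> t))) (axis i 1)
      = q0 * (S t + h * (S t * (1 - \<beta> t / \<alpha> t) / (1 + \<eta> * (\<beta> t / \<alpha> t))))"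
    if t: "t \<in> {1..T}" for t
  proof -
    have "(\<alpha> t * (1 - \<theta>) + \<beta> t * \<theta>)\<^sup>2 = \<alpha> t * S t"
      using alpha_pos[OF t] unfolding S_def by (simp add: field_simps power2_eq_square)
    then show ?thesis
      unfolding qform_matrix_inv_impact_axis_rescale[OF psi_id_pos alpha_pos[OF t] beta_nonneg[OF t] psi_f]
      using alpha_pos[OF t] by (simp add: q0_def h_def \<eta>_def \<eta>i_def field_simps)
  qed
  have "(\<Sum>t\<in>{1..T}. (\<alpha> t * (1 - \<theta>) + \<beta> t * \<theta>)\<^sup>2 * qform (matrix_inv (impact psi_id psi_f w (\<alpha> t) (\<beta> t))) (axis i 1))
      = q0 * ((\<Sum>t\<in>{1..T}. S t) + h * \<Delta>)"
    unfolding \<Delta>_def \<eta>_def[symmetric] by (simp add: cost_term S_def sum.distrib sum_distrib_left distrib_left)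
  moreover have "(\<Sum>t\<in>{1..T}. S t) = 1 + \<theta>\<^sup>2 * ((\<Sum>t\<in>{1..T}. (\<beta> t)\<^sup>2 / \<alpha> t) - 1)"
    unfolding S_def using alpha_pos by (intro sum_weighted_schedule_sq alpha_sum beta_sum) fastforce
  ultimately show ?thesis
    unfolding Upsilon_def q0_def[symmetric] h_def[symmetric] using \<open>q0 \<noteq> 0\<close> by simp
qed

lemma divide_diff_le_divide_diff_iff:
  fixes K x y :: real
  assumes "K > 0" "x < K" "y < K"
  shows "x / (K - x) \<le> y / (K - y) \<longleftrightarrow> x \<le> y"
  using assms by (simp add: divide_simps algebra_simps)

lemma rank_one_share_le_iff:
  fixes psi w :: "real ^ 'n" and f :: real
  assumes psi: "\<And>j. psi $ j > 0" and f: "f > 0"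
  defines "\<eta> \<equiv> f * (\<Sum>j\<in>UNIV. (w $ j)\<^sup>2 / psi $ j)"
    and "\<eta>i \<equiv> \<lambda>k. (w $ k)\<^sup>2 * f / psi $ k"
  shows "\<eta>i i / (1 + \<eta> - \<eta>i i) \<le> \<eta>i j / (1 + \<eta> - \<eta>i j)
    \<longleftrightarrow> (w $ i)\<^sup>2 / psi $ i \<le> (w $ j)\<^sup>2 / psi $ j"
proof -
  have weight: "0 \<le> \<eta>i k" "\<eta>i k \<le> \<eta>" for k
    unfolding \<eta>_def \<eta>i_def using psi less_imp_le[OF f] by (rule rank_one_weight_bounds)+
  have "0 < 1 + \<eta>"
    using weight[of i] by linarith
  moreover have "\<eta>i k < 1 + \<eta>" for k
    using weight(2)[of k] by linarith
  ultimately have "\<eta>i i / (1 + \<eta> - \<eta>i i) \<le> \<eta>i j / (1 + \<eta> - \<eta>i j) \<longleftrightarrow> \<eta>i i \<le> \<eta>i j"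
    by (intro divide_diff_le_divide_diff_iff)
  also have "\<dots> \<longleftrightarrow> f * ((w $ i)\<^sup>2 / psi $ i) \<le> f * ((w $ j)\<^sup>2 / psi $ j)"
    unfolding \<eta>i_def by (simp add: mult.commute)
  also have "\<dots> \<longleftrightarrow> (w $ i)\<^sup>2 / psi $ i \<le> (w $ j)\<^sup>2 / psi $ j"
    using f by (rule mult_le_cancel_left_pos)
  finally show ?thesis .
qed

lemma argmax_set_cong_order:
  assumes "\<And>i j. h i \<le> h j \<longleftrightarrow> r i \<le> r j"
  shows "argmax_set h = argmax_set r"
  using assms by (simp add: argmax_set_def)

lemma argmin_set_cong_order:
  assumes "\<And>i j. h i \<le> h j \<longleftrightarrow> r i \<le> r j"
  shows "argmin_set h = argmin_set r"
  using assms by (simp add: argmin_set_def)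

lemma argmax_set_affine_pos:
  fixes h :: "'n \<Rightarrow> real"
  assumes "\<Delta> > 0"
  shows "argmax_set (\<lambda>i. c + h i * \<Delta>) = argmax_set h"
  using assms by (simp add: argmax_set_def)

lemma argmax_set_affine_neg:
  fixes h :: "'n \<Rightarrow> real"
  assumes "\<Delta> < 0"
  shows "argmax_set (\<lambda>i. c + h i * \<Delta>) = argmin_set h"
  using assms by (simp add: argmax_set_def argmin_set_def)

lemma argmax_set_subset_affine_nonneg:
  fixes h :: "'n \<Rightarrow> real"
  assumes "\<Delta> \<ge> 0"
  shows "argmax_set h \<subseteq> argmax_set (\<lambda>i. c + h i * \<Delta>)"
  using assms by (auto simp: argmax_set_def intro: mult_right_mono)

lemma argmin_set_subset_argmax_set_affine_nonpos:
  fixes h :: "'n \<Rightarrow> real"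
  assumes "\<Delta> \<le> 0"
  shows "argmin_set h \<subseteq> argmax_set (\<lambda>i. c + h i * \<Delta>)"
  using assms by (auto simp: argmax_set_def argmin_set_def intro: mult_right_mono_neg)

theorem mainTheorem10:
  fixes psi_id :: "real ^ 'n" and w :: "real ^ 'n"
    and psi_f \<theta> :: real and T :: nat and \<alpha> \<beta> :: "nat \<Rightarrow> real"
  assumes psi_id_pos: "\<And>i. psi_id $ i > 0"
    and psi_f_pos: "psi_f > 0"
    and w_nz: "w \<noteq> 0"
    and theta: "0 \<le> \<theta>" "\<theta> \<le> 1"
    and alpha_pos: "\<And>t. t \<in> {1..T} \<Longrightarrow> \<alpha> t > 0"
    and beta_pos: "\<And>t. t \<in> {1..T} \<Longrightarrow> \<beta> t > 0"
    and alpha_sum: "(\<Sum>t\<in>{1..T}. \<alpha> t) = 1"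
    and beta_sum: "(\<Sum>t\<in>{1..T}. \<beta> t) = 1"
  defines "\<eta>1 \<equiv> psi_f * (\<Sum>j\<in>UNIV. (w $ j)\<^sup>2 / psi_id $ j)"
    and "\<Delta> \<equiv> (\<Sum>t\<in>{1..T}. \<alpha> t * (1 - \<theta> * (1 - \<beta> t / \<alpha> t))\<^sup>2 * (1 - \<beta> t / \<alpha> t)
                 / (1 + psi_f * (\<Sum>j\<in>UNIV. (w $ j)\<^sup>2 / psi_id $ j) * (\<beta> t / \<alpha> t)))"
    and "\<eta>1i \<equiv> (\<lambda>i. (w $ i)\<^sup>2 * psi_f / psi_id $ i)"
    and "U \<equiv> (\<lambda>i. Upsilon psi_id psi_f w \<theta> T \<alpha> \<beta> (axis i 1))"
    and "r \<equiv> (\<lambda>i. (w $ i)\<^sup>2 / psi_id $ i)"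
  shows "(\<forall>i. U i = 1 + \<theta>\<^sup>2 * ((\<Sum>t\<in>{1..T}. (\<beta> t)\<^sup>2 / \<alpha> t) - 1)
                    + \<eta>1i i / (1 + \<eta>1 - \<eta>1i i) * \<Delta>)
       \<and> (\<Delta> \<ge> 0 \<longrightarrow> argmax_set r \<subseteq> argmax_set U)
       \<and> (\<Delta> \<le> 0 \<longrightarrow> argmin_set r \<subseteq> argmax_set U)
       \<and> (\<Delta> > 0 \<longrightarrow> argmax_set U = argmax_set r)
       \<and> (\<Delta> < 0 \<longrightarrow> argmax_set U = argmin_set r)"
proof -
  define h where "h i = \<eta>1i i / (1 + \<eta>1 - \<eta>1i i)" for i
  define C where "C = 1 + \<theta>\<^sup>2 * ((\<Sum>t\<in>{1..T}. (\<beta> t)\<^sup>2 / \<alpha> t) - 1)"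
  have U: "U = (\<lambda>i. C + h i * \<Delta>)"
    unfolding U_def C_def h_def \<eta>1_def \<eta>1i_def \<Delta>_def
    by (rule ext, rule Upsilon_axis[OF psi_id_pos less_imp_le[OF psi_f_pos] alpha_pos
          less_imp_le[OF beta_pos] alpha_sum beta_sum])
  have "h i \<le> h j \<longleftrightarrow> r i \<le> r j" for i j
    unfolding h_def \<eta>1_def \<eta>1i_def r_def by (rule rank_one_share_le_iff[OF psi_id_pos psi_f_pos])
  then have max: "argmax_set h = argmax_set r" and min: "argmin_set h = argmin_set r"
    by (rule argmax_set_cong_order argmin_set_cong_order)+
  show ?thesis
  proof (intro conjI impI)
    show "\<forall>i. U i = 1 + \<theta>\<^sup>2 * ((\<Sum>t\<in>{1..T}. (\<beta> t)\<^sup>2 / \<alpha> t) - 1) + \<eta>1i i / (1 + \<eta>1 - \<eta>1i i) * \<Delta>"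
      by (simp add: U C_def h_def)
  next
    show "\<Delta> \<ge> 0 \<Longrightarrow> argmax_set r \<subseteq> argmax_set U"
      unfolding U max[symmetric] by (rule argmax_set_subset_affine_nonneg)
  next
    show "\<Delta> \<le> 0 \<Longrightarrow> argmin_set r \<subseteq> argmax_set U"
      unfolding U min[symmetric] by (rule argmin_set_subset_argmax_set_affine_nonpos)
  next
    show "\<Delta> > 0 \<Longrightarrow> argmax_set U = argmax_set r"
      unfolding U max[symmetric] by (rule argmax_set_affine_pos)
  next
    show "\<Delta> < 0 \<Longrightarrow> argmax_set U = argmin_set r"
      unfolding U min[symmetric] by (rule argmax_set_affine_neg)
  qed
qed

end
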